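(* Let $k,\ell\ge 1$ and let $G$ and $H$ be graphs with $\delta(G)\ge k$ and $\delta(H)\ge \ell$. Then \[ \Gamma_{\times k\ell,t}(G\times H)\ge\Gamma_{\times k,t}(G)\cdot\Gamma_{\times \ell,t}(H). \]
   Context: For an integer $k\ge1$ and a graph $G$ with $\delta(G)\ge k$, a set $S\subseteq V(G)$ is a $k$-tuple total dominating set ($k$TDS) if $|N_G(x)\cap S|\ge k$ for every $x\in V(G)$, and $\Gamma_{\times k,t}(G)$ is the maximum cardinality of a minimal (with respect to inclusion) $k$TDS of $G$. The cross (direct) product $G\times H$ has vertex set $V(G)\times V(H)$, with $(g_1,h_1)\sim(g_2,h_2)$ iff $g_1g_2\in E(G)$ and $h_1h_2\in E(H)$. *)

theory Defs
  imports Main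
begin

definition graph :: "'a set \<Rightarrow> ('a \<Rightarrow> 'a \<Rightarrow> bool) \<Rightarrow> bool" where
  "graph V E \<longleftrightarrow> finite V \<and> V \<noteq> {} \<and>
     (\<forall>x y. E x y \<longrightarrow> x \<in> V \<and> y \<in> V) \<and>
     (\<forall>x y. E x y \<longrightarrow> E y x) \<and> (\<forall>x. \<not> E x x)"

definition nbhd :: "'a set \<Rightarrow> ('a \<Rightarrow> 'a \<Rightarrow> bool) \<Rightarrow> 'a \<Rightarrow> 'a set" where
  "nbhd V E x = {y \<in> V. E x y}"

definition min_degree :: "'a set \<Rightarrow> ('a \<Rightarrow> 'a \<Rightarrow> bool) \<Rightarrow> nat" where
  "min_degree V E = Min ((\<lambda>x. card (nbhd V E x)) ` V)"

definition is_kTDS :: "nat \<Rightarrow> 'a set \<Rightarrow> ('a \<Rightarrow> 'a \<Rightarrow> bool) \<Rightarrow> 'a set \<Rightarrow> bool" where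
  "is_kTDS k V E S \<longleftrightarrow> S \<subseteq> V \<and> (\<forall>x\<in>V. card (nbhd V E x \<inter> S) \<ge> k)"

definition is_minimal_kTDS :: "nat \<Rightarrow> 'a set \<Rightarrow> ('a \<Rightarrow> 'a \<Rightarrow> bool) \<Rightarrow> 'a set \<Rightarrow> bool" where
  "is_minimal_kTDS k V E S \<longleftrightarrow> is_kTDS k V E S \<and> (\<forall>T. T \<subset> S \<longrightarrow> \<not> is_kTDS k V E T)"

definition upper_ktuple_tdom :: "nat \<Rightarrow> 'a set \<Rightarrow> ('a \<Rightarrow> 'a \<Rightarrow> bool) \<Rightarrow> nat" where
  "upper_ktuple_tdom k V E = Max {card S | S. is_minimal_kTDS k V E S}"

text \<open>Cross (direct) product of graphs: vertex set V1 \<times> V2.\<close>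
definition cross_edges :: "('a \<Rightarrow> 'a \<Rightarrow> bool) \<Rightarrow> ('b \<Rightarrow> 'b \<Rightarrow> bool) \<Rightarrow> ('a \<times> 'b) \<Rightarrow> ('a \<times> 'b) \<Rightarrow> bool" where
  "cross_edges E1 E2 p q \<longleftrightarrow> E1 (fst p) (fst q) \<and> E2 (snd p) (snd q)"

end

theory Submission
  imports Defs
begin

text \<open>If S1 and S2 are minimal k- and l-tuple total dominating sets of G and H, then
  S1 \<times> S2 is a minimal kl-tuple total dominating set of G \<times> H. Domination holds because
  the neighbourhood of (x, y) in G \<times> H is N(x) \<times> N(y). For minimality, every element a of
  a minimal kTDS S has a tight neighbour x, i.e. one with a \<in> N(x) and |N(x) \<inter> S| = k;
  removing (a, b) from S1 \<times> S2 leaves the product of tight neighbours of a and b with only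
  kl - 1 dominators. Taking S1, S2 of maximum size gives the inequality.\<close>

lemma finite_nbhd: "finite V \<Longrightarrow> finite (nbhd V E x)"
  unfolding nbhd_def by simp

lemma nbhd_cross_edges:
  "nbhd (V1 \<times> V2) (cross_edges E1 E2) (x, y) = nbhd V1 E1 x \<times> nbhd V2 E2 y"
  unfolding nbhd_def cross_edges_def by auto

lemma is_kTDS_vertex_set:
  assumes "finite V" and "min_degree V E \<ge> k"
  shows "is_kTDS k V E V"
  unfolding is_kTDS_def
proof (intro conjI ballI)
  fix x assume "x \<in> V"
  then have "min_degree V E \<le> card (nbhd V E x)"
    unfolding min_degree_def using assms(1) by (intro Min_le) auto
  moreover have "nbhd V E x \<inter> V = nbhd V E x" unfolding nbhd_def by auto
  ultimately show "k \<le> card (nbhd V E x \<inter> V)" using assms(2) by simp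
qed simp

lemma ex_minimal_kTDS_subset:
  assumes "finite V" and "is_kTDS k V E S"
  shows "\<exists>T \<subseteq> S. is_minimal_kTDS k V E T"
  using assms(2)
proof (induction "card S" arbitrary: S rule: less_induct)
  case less
  show ?case
  proof (cases "is_minimal_kTDS k V E S")
    case False
    then obtain T where "T \<subset> S" "is_kTDS k V E T"
      using less.prems unfolding is_minimal_kTDS_def by blast
    moreover have "finite S"
      using less.prems assms(1) unfolding is_kTDS_def by (blast intro: finite_subset)
    ultimately show ?thesis
      using less.hyps psubset_card_mono by (metis psubset_imp_subset subset_trans)
  qed blast
qed

lemma finite_minimal_kTDS_cards:
  "finite V \<Longrightarrow> finite {card S | S. is_minimal_kTDS k V E S}"
  by (rule finite_subset[of _ "card ` Pow V"])
    (auto simp: is_minimal_kTDS_def is_kTDS_def)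

lemma upper_ktuple_tdom_attained:
  assumes "finite V" and "min_degree V E \<ge> k"
  shows "\<exists>S. is_minimal_kTDS k V E S \<and> upper_ktuple_tdom k V E = card S"
proof -
  have "{card S | S. is_minimal_kTDS k V E S} \<noteq> {}"
    using ex_minimal_kTDS_subset[OF assms(1) is_kTDS_vertex_set[OF assms]] by auto
  from Max_in[OF finite_minimal_kTDS_cards[OF assms(1)] this] show ?thesis
    unfolding upper_ktuple_tdom_def by auto
qed

lemma card_minimal_kTDS_le_upper:
  "finite V \<Longrightarrow> is_minimal_kTDS k V E S \<Longrightarrow> card S \<le> upper_ktuple_tdom k V E"
  unfolding upper_ktuple_tdom_def by (rule Max_ge[OF finite_minimal_kTDS_cards]) auto

lemma minimal_kTDS_tight_neighbour:
  assumes min: "is_minimal_kTDS k V E S" and "a \<in> S" and "finite V"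
  obtains x where "x \<in> V" "a \<in> nbhd V E x" "card (nbhd V E x \<inter> S) = k"
proof -
  have S: "is_kTDS k V E S" using min unfolding is_minimal_kTDS_def by blast
  have "\<not> is_kTDS k V E (S - {a})"
    using min \<open>a \<in> S\<close> unfolding is_minimal_kTDS_def by blast
  moreover have "S - {a} \<subseteq> V" using S unfolding is_kTDS_def by auto
  ultimately obtain x where x: "x \<in> V" "card (nbhd V E x \<inter> (S - {a})) < k"
    unfolding is_kTDS_def by auto
  have ge: "k \<le> card (nbhd V E x \<inter> S)" using S x(1) unfolding is_kTDS_def by auto
  have "a \<in> nbhd V E x"
  proof (rule ccontr)
    assume "a \<notin> nbhd V E x"
    then have "nbhd V E x \<inter> (S - {a}) = nbhd V E x \<inter> S" by auto
    with x(2) ge show False by simp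
  qed
  moreover have "card (nbhd V E x \<inter> (S - {a})) = card (nbhd V E x \<inter> S) - 1"
  proof -
    have "nbhd V E x \<inter> (S - {a}) = (nbhd V E x \<inter> S) - {a}" by auto
    then show ?thesis
      using \<open>a \<in> nbhd V E x\<close> \<open>a \<in> S\<close> finite_nbhd[OF \<open>finite V\<close>, of E x]
      by (simp add: card_Diff_singleton)
  qed
  ultimately show thesis using that x ge by simp
qed

lemma nbhd_cross_edges_Int_Times:
  "nbhd (V1 \<times> V2) (cross_edges E1 E2) (x, y) \<inter> (S1 \<times> S2)
     = (nbhd V1 E1 x \<inter> S1) \<times> (nbhd V2 E2 y \<inter> S2)"
  by (auto simp: nbhd_cross_edges)

lemma is_kTDS_Times:
  assumes "is_kTDS k V1 E1 S1" and "is_kTDS l V2 E2 S2"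
  shows "is_kTDS (k * l) (V1 \<times> V2) (cross_edges E1 E2) (S1 \<times> S2)"
  using assms
  by (auto simp: is_kTDS_def nbhd_cross_edges_Int_Times card_cartesian_product
           intro: mult_le_mono)

lemma is_minimal_kTDS_Times:
  assumes S1: "is_minimal_kTDS k V1 E1 S1" and S2: "is_minimal_kTDS l V2 E2 S2"
    and "finite V1" and "finite V2"
  shows "is_minimal_kTDS (k * l) (V1 \<times> V2) (cross_edges E1 E2) (S1 \<times> S2)"
  unfolding is_minimal_kTDS_def
proof (intro conjI allI impI notI)
  show "is_kTDS (k * l) (V1 \<times> V2) (cross_edges E1 E2) (S1 \<times> S2)"
    using S1 S2 by (intro is_kTDS_Times) (auto simp: is_minimal_kTDS_def)
next
  fix T assume T: "T \<subset> S1 \<times> S2"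
    and T_dom: "is_kTDS (k * l) (V1 \<times> V2) (cross_edges E1 E2) T"
  then obtain a b where ab: "a \<in> S1" "b \<in> S2" "(a, b) \<notin> T" by auto
  obtain x where x: "x \<in> V1" "a \<in> nbhd V1 E1 x" "card (nbhd V1 E1 x \<inter> S1) = k"
    using minimal_kTDS_tight_neighbour[OF S1 ab(1) \<open>finite V1\<close>] .
  obtain y where y: "y \<in> V2" "b \<in> nbhd V2 E2 y" "card (nbhd V2 E2 y \<inter> S2) = l"
    using minimal_kTDS_tight_neighbour[OF S2 ab(2) \<open>finite V2\<close>] .
  define P where "P = (nbhd V1 E1 x \<inter> S1) \<times> (nbhd V2 E2 y \<inter> S2)"
  have "finite P"
    unfolding P_def using finite_nbhd[OF \<open>finite V1\<close>] finite_nbhd[OF \<open>finite V2\<close>] by auto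
  have "nbhd (V1 \<times> V2) (cross_edges E1 E2) (x, y) \<inter> T \<subseteq> P - {(a, b)}"
    using nbhd_cross_edges_Int_Times[of V1 V2 E1 E2 x y S1 S2] T ab(3)
    unfolding P_def by auto
  then have "card (nbhd (V1 \<times> V2) (cross_edges E1 E2) (x, y) \<inter> T) \<le> card (P - {(a, b)})"
    using \<open>finite P\<close> by (intro card_mono) auto
  also have "\<dots> < card P"
    using \<open>finite P\<close> ab x y by (intro card_Diff1_less) (auto simp: P_def)
  also have "\<dots> = k * l"
    using x y by (simp add: P_def card_cartesian_product)
  finally show False using T_dom x(1) y(1) unfolding is_kTDS_def by fastforce
qed

theorem mainTheorem13:
  fixes V1 :: "'a set" and E1 :: "'a \<Rightarrow> 'a \<Rightarrow> bool"
    and V2 :: "'b set" and E2 :: "'b \<Rightarrow> 'b \<Rightarrow> bool"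
    and k l :: nat
  assumes "k \<ge> 1" and "l \<ge> 1"
    and "graph V1 E1" and "graph V2 E2"
    and "min_degree V1 E1 \<ge> k" and "min_degree V2 E2 \<ge> l"
  shows "upper_ktuple_tdom (k * l) (V1 \<times> V2) (cross_edges E1 E2)
           \<ge> upper_ktuple_tdom k V1 E1 * upper_ktuple_tdom l V2 E2"
proof -
  have "finite V1" "finite V2" using assms(3,4) unfolding graph_def by auto
  obtain S1 where S1: "is_minimal_kTDS k V1 E1 S1" "upper_ktuple_tdom k V1 E1 = card S1"
    using upper_ktuple_tdom_attained[OF \<open>finite V1\<close> assms(5)] by blast
  obtain S2 where S2: "is_minimal_kTDS l V2 E2 S2" "upper_ktuple_tdom l V2 E2 = card S2"
    using upper_ktuple_tdom_attained[OF \<open>finite V2\<close> assms(6)] by blast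
  have "card (S1 \<times> S2) \<le> upper_ktuple_tdom (k * l) (V1 \<times> V2) (cross_edges E1 E2)"
    using \<open>finite V1\<close> \<open>finite V2\<close>
    by (intro card_minimal_kTDS_le_upper is_minimal_kTDS_Times[OF S1(1) S2(1)]) auto
  then show ?thesis using S1(2) S2(2) by (simp add: card_cartesian_product)
qed

end
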